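(* Let $(\Sigma,\mathsf{ar})$ be an at most countable binding signature with associated functors $F,F_\alpha$ and maps $a^{(n)}$. For every $n$, the commuting square formed by $F^n(!):F^{n+1}1\to F^n1$, $a^{(n)}:F^n1\to F_\alpha^n1$, $a^{(n+1)}:F^{n+1}1\to F_\alpha^{n+1}1$ and $F_\alpha^n(!):F_\alpha^{n+1}1\to F_\alpha^n1$ is a safe square.
   Context: Nominal sets over a countably infinite set $\mathcal V$ of names; $[\mathcal V]X$ the name-abstraction with classes $\langle x\rangle u$. Binding signature: symbols $\mathsf{op}\in\Sigma$ with arities finite lists $(n_1,\dots,n_k)$. $F_\alpha X=\mathcal V+\coprod_{\mathsf{op}}\prod_i[\mathcal V]^{n_i}X$, $FX=\mathcal V+\coprod_{\mathsf{op}}\prod_i(\mathcal V^{n_i}\times X)$, $q_X:FX\to F_\alpha X$ identity on $\mathcal V$ and $(x^1,\dots,x^n,u)\mapsto\langle x^1\rangle\cdots\langle x^n\rangle u$ on factors. $1=\{*\}$, $!$ the unique map to $1$; $a^{(0)}=\mathrm{id}_1$, $a^{(n+1)}=q_{F_\alpha^n1}\circ F(a^{(n)})$. For equivariant $f$: $u$ is $f$-safe if $|\mathsf{supp}(u)|=\max\{|\mathsf{supp}(v)|:v\in f^{-1}(f(u))\}$; $\mathsf{bv}_f(u)=\mathsf{supp}(u)\setminus\mathsf{supp}(f(u))$. A commuting square $p:Z\to X$, $f:X\to W$, $g:Z\to Y$, $q:Y\to W$ ($f\circ p=q\circ g$) is a safe square if for every $f$-safe $u\in X$ and $v\in Y$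 with $f(u)=q(v)$ and $\mathsf{bv}_f(u)\cap\mathsf{supp}(v)=\emptyset$ there is a $g$-safe $z\in Z$ with $p(z)=u$, $g(z)=v$. *)

theory Defs
  imports "HOL-Library.Countable_Set"
begin

text \<open>Names: the countably infinite set V is modelled by the type nat.
Raw terms: Star is the element of 1, Var x a name, and Op s args an operation
symbol applied to a list of (binder list, subterm) pairs.\<close>

datatype 'o rtm = Star | Var nat | Op 'o "(nat list \<times> 'o rtm) list"

definition swp :: "nat \<Rightarrow> nat \<Rightarrow> nat \<Rightarrow> nat" where
  "swp a b = (\<lambda>c. if c = a then b else if c = b then a else c)"

primrec rperm :: "(nat \<Rightarrow> nat) \<Rightarrow> 'o rtm \<Rightarrow> 'o rtm" where
  "rperm f Star = Star"
| "rperm f (Var x) = Var (f x)"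
| "rperm f (Op s as) = Op s (map (map_prod (map f) (rperm f)) as)"

definition nsupp :: "('x \<Rightarrow> 'x \<Rightarrow> bool) \<Rightarrow> ((nat \<Rightarrow> nat) \<Rightarrow> 'x \<Rightarrow> 'x) \<Rightarrow> 'x \<Rightarrow> nat set" where
  "nsupp E perm x = {a. infinite {b. \<not> E (perm (swp a b) x) x}}"

definition gsupp :: "((nat \<Rightarrow> nat) \<Rightarrow> 'x \<Rightarrow> 'x) \<Rightarrow> 'x \<Rightarrow> nat set" where
  "gsupp perm x = nsupp (=) perm x"

definition aperm :: "(nat \<Rightarrow> nat) \<Rightarrow> nat list \<times> 'o rtm \<Rightarrow> nat list \<times> 'o rtm" where
  "aperm f p = (map f (fst p), rperm f (snd p))"

text \<open>Equality in the iterated abstraction [V]^k X of the elements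
  <xs_1>...<xs_k>[t] and <ys_1>...<ys_k>[s], given equality R on X:
  <a>u = <b>v iff (a = b and u = v) or (b fresh for u and (a b).u = v).\<close>
primrec abs_eq_k :: "nat \<Rightarrow> ('o rtm \<Rightarrow> 'o rtm \<Rightarrow> bool)
    \<Rightarrow> nat list \<times> 'o rtm \<Rightarrow> nat list \<times> 'o rtm \<Rightarrow> bool" where
  "abs_eq_k 0 R p q = (fst p = [] \<and> fst q = [] \<and> R (snd p) (snd q))"
| "abs_eq_k (Suc k) R p q =
     (case (fst p, fst q) of
        (x # xs, y # ys) \<Rightarrow>
          (x = y \<and> abs_eq_k k R (xs, snd p) (ys, snd q))
          \<or> (y \<notin> nsupp (abs_eq_k k R) aperm (xs, snd p)
             \<and> abs_eq_k k R (aperm (swp x y) (xs, snd p)) (ys, snd q))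
      | _ \<Rightarrow> False)"

text \<open>Equality in F_alpha^n 1 of the images of two raw terms.\<close>
primrec aeq :: "nat \<Rightarrow> 'o rtm \<Rightarrow> 'o rtm \<Rightarrow> bool" where
  "aeq 0 t u = (t = Star \<and> u = Star)"
| "aeq (Suc n) t u =
     (case t of
        Star \<Rightarrow> False
      | Var x \<Rightarrow> u = Var x
      | Op s as \<Rightarrow> (case u of
            Op s2 bs \<Rightarrow> s = s2 \<and> list_all2 (\<lambda>p q. abs_eq_k (length (fst p)) (aeq n) p q) as bs
          | _ \<Rightarrow> False))"

text \<open>Elements of F^n 1 for the signature (Sig, ar).\<close>
primrec wf :: "'o set \<Rightarrow> ('o \<Rightarrow> nat list) \<Rightarrow> nat \<Rightarrow> 'o rtm \<Rightarrow> bool" where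
  "wf S ar 0 t = (t = Star)"
| "wf S ar (Suc n) t =
     (case t of
        Star \<Rightarrow> False
      | Var x \<Rightarrow> True
      | Op s as \<Rightarrow> s \<in> S \<and> map (length \<circ> fst) as = ar s \<and> (\<forall>p\<in>set as. wf S ar n (snd p)))"

definition Fset :: "'o set \<Rightarrow> ('o \<Rightarrow> nat list) \<Rightarrow> nat \<Rightarrow> 'o rtm set" where
  "Fset S ar n = {t. wf S ar n t}"

text \<open>a^(n) : F^n 1 \<rightarrow> F_alpha^n 1, elements of F_alpha^n 1 being the classes.\<close>
definition acls :: "'o set \<Rightarrow> ('o \<Rightarrow> nat list) \<Rightarrow> nat \<Rightarrow> 'o rtm \<Rightarrow> 'o rtm set" where
  "acls S ar n t = {u. wf S ar n u \<and> aeq n t u}"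

definition Faset :: "'o set \<Rightarrow> ('o \<Rightarrow> nat list) \<Rightarrow> nat \<Rightarrow> 'o rtm set set" where
  "Faset S ar n = acls S ar n ` Fset S ar n"

text \<open>F^n(!) : F^(n+1) 1 \<rightarrow> F^n 1 is truncation at depth n.\<close>
primrec trunc :: "nat \<Rightarrow> 'o rtm \<Rightarrow> 'o rtm" where
  "trunc 0 t = Star"
| "trunc (Suc n) t = (case t of Op s as \<Rightarrow> Op s (map (\<lambda>(xs, r). (xs, trunc n r)) as) | _ \<Rightarrow> t)"

text \<open>F_alpha^n(!) : F_alpha^(n+1) 1 \<rightarrow> F_alpha^n 1, computed on a representative.\<close>
definition bangA :: "'o set \<Rightarrow> ('o \<Rightarrow> nat list) \<Rightarrow> nat \<Rightarrow> 'o rtm set \<Rightarrow> 'o rtm set" where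
  "bangA S ar n c = acls S ar n (trunc n (SOME t. t \<in> c))"

definition rsupp :: "'o rtm \<Rightarrow> nat set" where
  "rsupp t = gsupp rperm t"

definition csupp :: "'o rtm set \<Rightarrow> nat set" where
  "csupp c = gsupp (\<lambda>f c. rperm f ` c) c"

definition safe :: "'x set \<Rightarrow> ('x \<Rightarrow> nat set) \<Rightarrow> ('x \<Rightarrow> 'w) \<Rightarrow> 'x \<Rightarrow> bool" where
  "safe X sX f u = (u \<in> X \<and> (\<forall>v\<in>X. f v = f u \<longrightarrow> card (sX v) \<le> card (sX u)))"

definition safe_square ::
  "'z set \<Rightarrow> 'x set \<Rightarrow> 'y set \<Rightarrow> 'w set
   \<Rightarrow> ('z \<Rightarrow> nat set) \<Rightarrow> ('x \<Rightarrow> nat set) \<Rightarrow> ('y \<Rightarrow> nat set) \<Rightarrow> ('w \<Rightarrow> nat set)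
   \<Rightarrow> ('z \<Rightarrow> 'x) \<Rightarrow> ('x \<Rightarrow> 'w) \<Rightarrow> ('z \<Rightarrow> 'y) \<Rightarrow> ('y \<Rightarrow> 'w) \<Rightarrow> bool" where
  "safe_square Z X Y W sZ sX sY sW p f g q =
    ((\<forall>z\<in>Z. p z \<in> X \<and> g z \<in> Y \<and> f (p z) = q (g z))
     \<and> (\<forall>u\<in>X. \<forall>v\<in>Y. safe X sX f u \<and> f u = q v \<and> (sX u - sW (f u)) \<inter> sY v = {}
          \<longrightarrow> (\<exists>z\<in>Z. safe Z sZ g z \<and> p z = u \<and> g z = v)))"

end

theory Submission
  imports Defs
begin

text \<open>Represent an element of \<open>F\<^sup>n 1\<close> by a raw term with explicitly named binders and an
element of \<open>F\<^sub>\<alpha>\<^sup>n 1\<close> by the de Bruijn form of any representative: two raw terms are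
\<open>\<alpha>\<close>-equal iff their de Bruijn forms agree. Then the support of a raw term is the set of all
names occurring in it, the support of its class is the set of its free names, and a raw term is
safe exactly when it satisfies the Barendregt convention: its binders are pairwise distinct and
distinct from its free names. Indeed, a term has at most as many names as its class has free names
plus binder positions, with equality exactly for such terms, and every class has such a
representative. For the square, let \<open>u \<in> F\<^sup>n 1\<close> be such a term and
\<open>v \<in> F\<^sub>\<alpha>\<^sup>n\<^sup>+\<^sup>1 1\<close> a class with the same image in \<open>F\<^sub>\<alpha>\<^sup>n 1\<close>, none of whose
free names is bound in \<open>u\<close>. Graft onto the leaves of \<open>u\<close> the missing bottom layer of the de
Bruijn form of \<open>v\<close>, naming its binders by fresh names; the result truncates to \<open>u\<close>, represents
\<open>v\<close> and again satisfies the Barendregt convention.\<close>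

section \<open>De Bruijn terms\<close>

datatype 'o dbtm = DStar | DFree nat | DBound nat | DOp 'o "(nat \<times> 'o dbtm) list"

fun env_index :: "nat list \<Rightarrow> nat \<Rightarrow> nat option" where
  "env_index [] x = None"
| "env_index (y # ys) x = (if x = y then Some 0 else map_option Suc (env_index ys x))"

text \<open>The innermost binder comes first in the environment, hence the \<open>rev\<close>.\<close>

fun to_db :: "nat list \<Rightarrow> 'o rtm \<Rightarrow> 'o dbtm" where
  "to_db env Star = DStar"
| "to_db env (Var x) = (case env_index env x of None \<Rightarrow> DFree x | Some i \<Rightarrow> DBound i)"
| "to_db env (Op s as) = DOp s (map (\<lambda>p. (length (fst p), to_db (rev (fst p) @ env) (snd p))) as)"

fun dperm :: "(nat \<Rightarrow> nat) \<Rightarrow> 'o dbtm \<Rightarrow> 'o dbtm" where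
  "dperm f DStar = DStar"
| "dperm f (DFree x) = DFree (f x)"
| "dperm f (DBound i) = DBound i"
| "dperm f (DOp s ds) = DOp s (map (\<lambda>p. (fst p, dperm f (snd p))) ds)"

fun dfrees :: "'o dbtm \<Rightarrow> nat set" where
  "dfrees (DFree x) = {x}"
| "dfrees (DOp s ds) = (\<Union>p\<in>set ds. dfrees (snd p))"
| "dfrees _ = {}"

text \<open>\<open>dclose x L d\<close> binds the free name \<open>x\<close> by the binder just outside the \<open>L\<close> innermost ones.\<close>

fun dclose :: "nat \<Rightarrow> nat \<Rightarrow> 'o dbtm \<Rightarrow> 'o dbtm" where
  "dclose x L DStar = DStar"
| "dclose x L (DFree y) = (if y = x then DBound L else DFree y)"
| "dclose x L (DBound i) = DBound i"
| "dclose x L (DOp s ds) = DOp s (map (\<lambda>p. (fst p, dclose x (L + fst p) (snd p))) ds)"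

fun dbound_below :: "nat \<Rightarrow> 'o dbtm \<Rightarrow> bool" where
  "dbound_below L (DBound i) = (i < L)"
| "dbound_below L (DOp s ds) = (\<forall>p\<in>set ds. dbound_below (L + fst p) (snd p))"
| "dbound_below L _ = True"

fun nbinders :: "'o dbtm \<Rightarrow> nat" where
  "nbinders (DOp s ds) = sum_list (map (\<lambda>p. fst p + nbinders (snd p)) ds)"
| "nbinders _ = 0"

fun dtrunc :: "nat \<Rightarrow> 'o dbtm \<Rightarrow> 'o dbtm" where
  "dtrunc 0 d = DStar"
| "dtrunc (Suc n) (DOp s ds) = DOp s (map (\<lambda>p. (fst p, dtrunc n (snd p))) ds)"
| "dtrunc (Suc n) d = d"

primrec dwf :: "'o set \<Rightarrow> ('o \<Rightarrow> nat list) \<Rightarrow> nat \<Rightarrow> 'o dbtm \<Rightarrow> bool" where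
  "dwf S ar 0 d = (d = DStar)"
| "dwf S ar (Suc n) d = (case d of
       DStar \<Rightarrow> False
     | DOp s ds \<Rightarrow> s \<in> S \<and> map fst ds = ar s \<and> (\<forall>p\<in>set ds. dwf S ar n (snd p))
     | _ \<Rightarrow> True)"

lemma swp_inj: "inj (swp a b)"
  by (auto simp: inj_def swp_def split: if_splits)

lemma swp_swp [simp]: "swp a b (swp a b x) = x"
  by (auto simp: swp_def)

lemma env_index_map: "inj f \<Longrightarrow> env_index (map f env) (f x) = env_index env x"
  by (induction env) (auto simp: inj_eq)

lemma env_index_None: "env_index env y = None \<longleftrightarrow> y \<notin> set env"
  by (induction env) auto

lemma env_index_SomeD: "env_index env y = Some i \<Longrightarrow> i < length env \<and> env ! i = y"
  by (induction env arbitrary: i) (auto split: if_splits)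

lemma env_index_nth: "distinct env \<Longrightarrow> i < length env \<Longrightarrow> env_index env (env ! i) = Some i"
proof (induction env arbitrary: i)
  case (Cons a env) then show ?case by (cases i) auto
qed simp

lemma env_index_snoc:
  "env_index (env @ [x]) y =
     (if y \<in> set env then env_index env y else if y = x then Some (length env) else None)"
  by (induction env) auto

lemma to_db_perm: "inj f \<Longrightarrow> to_db (map f env) (rperm f t) = dperm f (to_db env t)"
proof (induction env t rule: to_db.induct)
  case (2 env x)
  then show ?case by (auto simp: env_index_map split: option.splits)
next
  case (3 env s as)
  then show ?case by (auto simp: rev_map[symmetric])
qed auto

lemma to_db_swp: "to_db [] (rperm (swp a b) t) = dperm (swp a b) (to_db [] t)"
  using to_db_perm[of "swp a b" "[]"] swp_inj by simp

lemma to_db_snoc: "to_db (env @ [x]) t = dclose x (length env) (to_db env t)"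
proof (induction env t rule: to_db.induct)
  case (2 env y)
  then show ?case
    by (auto simp: env_index_snoc env_index_None dest: env_index_SomeD split: option.splits)
next
  case (3 env s as)
  then show ?case by (auto simp: add.commute)
qed auto

lemma dbound_below_to_db: "dbound_below (length env) (to_db env t)"
  by (induction env t rule: to_db.induct)
    (auto dest: env_index_SomeD split: option.splits simp: add.commute)

lemma to_db_trunc: "to_db env (trunc n t) = dtrunc n (to_db env t)"
proof (induction n arbitrary: env t)
  case (Suc n)
  then show ?case by (cases t) (auto split: option.splits simp: case_prod_beta)
qed simp

lemma dwf_to_db: "wf S ar n t \<Longrightarrow> dwf S ar n (to_db env t)"
proof (induction n arbitrary: env t)
  case (Suc n) then show ?case by (cases t) (auto split: option.splits simp: comp_def)
qed simp

lemma dfrees_finite [simp]: "finite (dfrees d)"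
  by (induction d rule: dfrees.induct) auto

lemma dfrees_dperm [simp]: "dfrees (dperm f d) = f ` dfrees d"
  by (induction f d rule: dperm.induct) auto

lemma dfrees_dclose [simp]: "dfrees (dclose x L d) = dfrees d - {x}"
  by (induction x L d rule: dclose.induct) auto

lemma dbound_below_dperm [simp]: "dbound_below L (dperm f d) = dbound_below L d"
  by (induction f d arbitrary: L rule: dperm.induct) auto

lemma dperm_id: "\<forall>x\<in>dfrees d. f x = x \<Longrightarrow> dperm f d = d"
  by (induction f d rule: dperm.induct) (auto simp: map_idI)

lemma dclose_dperm_swp: "y \<notin> dfrees d \<Longrightarrow> dclose y L (dperm (swp x y) d) = dclose x L d"
  by (induction x L d rule: dclose.induct) (auto simp: swp_def)

lemma map_eq_map_iff_list_all2: "map f xs = map g ys \<longleftrightarrow> list_all2 (\<lambda>x y. f x = g y) xs ys"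
  by (induction xs arbitrary: ys) (auto simp: list_all2_Cons1)

lemma dclose_inj:
  "dbound_below L d1 \<Longrightarrow> dbound_below L d2 \<Longrightarrow> dclose x L d1 = dclose x L d2 \<Longrightarrow> d1 = d2"
proof (induction x L d1 arbitrary: d2 rule: dclose.induct)
  case (4 x L s ds)
  then obtain ds2 where d2: "d2 = DOp s ds2"
    by (cases d2) (auto split: if_splits)
  have "list_all2 (\<lambda>p q. fst p = fst q \<and> dclose x (L + fst p) (snd p) = dclose x (L + fst q) (snd q))
      ds ds2"
    using "4.prems"(3) d2 by (simp add: map_eq_map_iff_list_all2)
  then have "list_all2 (=) ds ds2"
    by (rule list.rel_mono_strong) (use "4.IH" "4.prems"(1,2) d2 in \<open>auto simp: prod_eq_iff\<close>)
  then show ?case using d2 by (simp add: list.rel_eq)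
qed (auto elim: dbound_below.elims split: if_splits)

lemma dclose_eq_iff:
  assumes "dbound_below L d1" "dbound_below L d2"
  shows "dclose x L d1 = dclose y L d2 \<longleftrightarrow>
    (x = y \<and> d1 = d2) \<or> (y \<notin> dfrees d1 \<and> dperm (swp x y) d1 = d2)"
proof
  assume e: "dclose x L d1 = dclose y L d2"
  show "(x = y \<and> d1 = d2) \<or> (y \<notin> dfrees d1 \<and> dperm (swp x y) d1 = d2)"
  proof (cases "x = y")
    case True then show ?thesis using dclose_inj assms e by blast
  next
    case False
    have "y \<notin> dfrees (dclose x L d1)" using e by simp
    with False have y: "y \<notin> dfrees d1" by simp
    then have "dclose y L (dperm (swp x y) d1) = dclose y L d2"
      using e dclose_dperm_swp by metis
    then show ?thesis using dclose_inj[of L "dperm (swp x y) d1" d2 y] assms y by simp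
  qed
qed (use dclose_dperm_swp in metis)

section \<open>Nominal support\<close>

lemma nsupp_eq_names:
  fixes perm :: "(nat \<Rightarrow> nat) \<Rightarrow> 'x \<Rightarrow> 'x" and N :: "'x \<Rightarrow> nat set"
  assumes fin: "finite (N x)"
    and names_perm: "\<And>a b. N (perm (swp a b) x) = swp a b ` N x"
    and perm_fix: "\<And>a b. \<forall>y\<in>N x. swp a b y = y \<Longrightarrow> perm (swp a b) x = x"
  shows "nsupp (=) perm x = N x"
proof -
  have "infinite {b. perm (swp a b) x \<noteq> x} \<longleftrightarrow> a \<in> N x" for a
  proof
    assume inf: "infinite {b. perm (swp a b) x \<noteq> x}"
    show "a \<in> N x"
    proof (rule ccontr)
      assume "a \<notin> N x"
      then have "perm (swp a b) x = x" if "b \<notin> N x" for b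
        by (intro perm_fix) (use that in \<open>auto simp: swp_def\<close>)
      then have "{b. perm (swp a b) x \<noteq> x} \<subseteq> N x"
        by blast
      then show False using inf fin finite_subset by blast
    qed
  next
    assume a: "a \<in> N x"
    have "perm (swp a b) x \<noteq> x" if "b \<notin> N x" for b
    proof
      assume "perm (swp a b) x = x"
      then have "b \<in> N x"
        using a names_perm[of a b] by (force simp: swp_def)
      with that show False by simp
    qed
    then have "- insert a (N x) \<subseteq> {b. perm (swp a b) x \<noteq> x}"
      by blast
    moreover have "infinite (- insert a (N x))"
      using fin by (simp add: Compl_eq_Diff_UNIV)
    ultimately show "infinite {b. perm (swp a b) x \<noteq> x}"
      using infinite_super by blast
  qed
  then show ?thesis by (simp add: nsupp_def)
qed

lemma nsupp_cong:
  "(\<And>a b. E (perm (swp a b) x) x \<longleftrightarrow> perm' (swp a b) y = y) \<Longrightarrow>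
    nsupp E perm x = nsupp (=) perm' y"
  by (simp add: nsupp_def)

lemma nsupp_dperm: "nsupp (=) dperm d = dfrees d"
  by (rule nsupp_eq_names) (auto intro: dperm_id)

section \<open>Alpha-equality as equality of de Bruijn forms\<close>

primrec rshape :: "nat \<Rightarrow> 'o rtm \<Rightarrow> bool" where
  "rshape 0 t = (t = Star)"
| "rshape (Suc n) t = (case t of
       Star \<Rightarrow> False
     | Var x \<Rightarrow> True
     | Op s as \<Rightarrow> (\<forall>p\<in>set as. rshape n (snd p)))"

lemma rshape_rperm [simp]: "rshape n (rperm f t) = rshape n t"
proof (induction n arbitrary: t)
  case 0 then show ?case by (cases t) auto
next
  case (Suc n) then show ?case by (cases t) auto
qed

lemma wf_rshape: "wf S ar n t \<Longrightarrow> rshape n t"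
proof (induction n arbitrary: t)
  case (Suc n) then show ?case by (cases t) auto
qed simp

lemma abs_eq_k_iff_to_db:
  assumes P_perm: "\<And>f t. P (rperm f t) = P t"
  shows "abs_eq_k k (\<lambda>t s. P t \<and> P s \<and> to_db [] t = to_db [] s) (xs, t) (ys, s) \<longleftrightarrow>
     length xs = k \<and> length ys = k \<and> P t \<and> P s \<and> to_db (rev xs) t = to_db (rev ys) s"
proof (induction k arbitrary: xs t ys s)
  case (Suc k)
  define E where "E = abs_eq_k k (\<lambda>t s. P t \<and> P s \<and> to_db [] t = to_db [] s)"
  have IH: "E (xs, t) (ys, s) \<longleftrightarrow>
      length xs = k \<and> length ys = k \<and> P t \<and> P s \<and> to_db (rev xs) t = to_db (rev ys) s"
    for xs t ys s
    using Suc.IH unfolding E_def by blast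
  have to_db_swp_rev: "to_db (rev (map (swp a b) xs)) (rperm (swp a b) t) =
      dperm (swp a b) (to_db (rev xs) t)" for a b xs t
    by (metis to_db_perm rev_map swp_inj)
  show ?case
  proof (cases "xs = [] \<or> ys = []")
    case True
    then show ?thesis by (auto split: list.splits)
  next
    case False
    then obtain x xs' y ys' where xs: "xs = x # xs'" and ys: "ys = y # ys'"
      by (meson list.exhaust)
    define d1 where "d1 = to_db (rev xs') t"
    define d2 where "d2 = to_db (rev ys') s"
    have lhs: "abs_eq_k (Suc k) (\<lambda>t s. P t \<and> P s \<and> to_db [] t = to_db [] s) (xs, t) (ys, s) \<longleftrightarrow>
      (x = y \<and> E (xs', t) (ys', s)) \<or>
      (y \<notin> nsupp E aperm (xs', t) \<and> E (map (swp x y) xs', rperm (swp x y) t) (ys', s))"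
      unfolding xs ys E_def by (simp add: aperm_def)
    have supp: "nsupp E aperm (xs', t) = dfrees d1" if "length xs' = k" "P t"
    proof -
      have "nsupp E aperm (xs', t) = nsupp (=) dperm d1"
        by (rule nsupp_cong)
          (use that P_perm in \<open>simp add: aperm_def IH d1_def to_db_swp_rev\<close>)
      then show ?thesis by (simp add: nsupp_dperm)
    qed
    have "to_db (rev xs) t = to_db (rev ys) s \<longleftrightarrow>
        dclose x (length (rev xs')) d1 = dclose y (length (rev ys')) d2"
      unfolding xs ys d1_def d2_def by (simp add: to_db_snoc)
    then have rhs: "length xs = Suc k \<and> length ys = Suc k \<and> P t \<and> P s \<and>
        to_db (rev xs) t = to_db (rev ys) s \<longleftrightarrow>
      length xs' = k \<and> length ys' = k \<and> P t \<and> P s \<and>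
        ((x = y \<and> d1 = d2) \<or> (y \<notin> dfrees d1 \<and> dperm (swp x y) d1 = d2))"
      using dclose_eq_iff[of k d1 d2 x y] dbound_below_to_db[of "rev xs'" t]
        dbound_below_to_db[of "rev ys'" s]
      unfolding xs ys d1_def d2_def by auto
    show ?thesis
      unfolding lhs rhs IH using supp P_perm d1_def d2_def by (auto simp: to_db_swp_rev)
  qed
qed auto

lemma list_all2_conj_split:
  "list_all2 (\<lambda>p q. A p \<and> B q \<and> C p q) xs ys \<longleftrightarrow>
     list_all2 C xs ys \<and> (\<forall>p\<in>set xs. A p) \<and> (\<forall>q\<in>set ys. B q)"
  by (induction xs arbitrary: ys) (auto simp: list_all2_Cons1)

lemma aeq_iff_to_db:
  fixes t u :: "'o rtm"
  shows "aeq n t u \<longleftrightarrow> rshape n t \<and> rshape n u \<and> to_db [] t = to_db [] u"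
proof (induction n arbitrary: t u)
  case (Suc n)
  have aeq_n: "aeq n = (\<lambda>(t :: 'o rtm) s. rshape n t \<and> rshape n s \<and> to_db [] t = to_db [] s)"
    by (intro ext) (rule Suc.IH)
  have args: "abs_eq_k (length (fst p)) (aeq n) p q \<longleftrightarrow> rshape n (snd p) \<and> rshape n (snd q) \<and>
      (length (fst p), to_db (rev (fst p)) (snd p)) = (length (fst q), to_db (rev (fst q)) (snd q))"
    for p q :: "nat list \<times> 'o rtm"
    using abs_eq_k_iff_to_db[where P = "rshape n" and k = "length (fst p)" and xs = "fst p"
        and t = "snd p" and ys = "fst q" and s = "snd q", OF rshape_rperm]
    unfolding aeq_n by auto
  have args: "(\<lambda>p :: nat list \<times> 'o rtm. abs_eq_k (length (fst p)) (aeq n) p) = (\<lambda>p q. rshape n (snd p) \<and>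
      rshape n (snd q) \<and>
      (length (fst p), to_db (rev (fst p)) (snd p)) = (length (fst q), to_db (rev (fst q)) (snd q)))"
    by (intro ext) (rule args)
  show ?case
  proof (cases t)
    case t: (Op s as)
    show ?thesis
    proof (cases u)
      case (Op s2 bs)
      then show ?thesis
        using t by (auto simp: args list_all2_conj_split map_eq_map_iff_list_all2)
    qed (use t in auto)
  qed (cases u; auto)+
qed auto

lemma acls_eq: "wf S ar n t \<Longrightarrow> acls S ar n t = {u. wf S ar n u \<and> to_db [] u = to_db [] t}"
  unfolding acls_def aeq_iff_to_db using wf_rshape[of S ar n t] wf_rshape[of S ar n] by auto

lemma acls_eq_iff:
  "wf S ar n t \<Longrightarrow> wf S ar n t' \<Longrightarrow> acls S ar n t = acls S ar n t' \<longleftrightarrow> to_db [] t = to_db [] t'"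
  by (auto simp: acls_eq set_eq_iff)

lemma wf_trunc: "wf S ar (Suc n) t \<Longrightarrow> wf S ar n (trunc n t)"
proof (induction n arbitrary: t)
  case (Suc n) then show ?case by (cases t) (auto simp: case_prod_beta comp_def)
qed simp

lemma wf_rperm [simp]: "wf S ar n (rperm f t) = wf S ar n t"
proof (induction n arbitrary: t)
  case 0 then show ?case by (cases t) auto
next
  case (Suc n) then show ?case by (cases t) (auto simp: comp_def)
qed

lemma bangA_acls:
  assumes z: "wf S ar (Suc n) z"
  shows "bangA S ar n (acls S ar (Suc n) z) = acls S ar n (trunc n z)"
proof -
  define t where "t = (SOME t. t \<in> acls S ar (Suc n) z)"
  have "t \<in> acls S ar (Suc n) z"
    unfolding t_def by (rule someI) (use z in \<open>simp add: acls_eq\<close>)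
  then have t: "wf S ar (Suc n) t" "to_db [] t = to_db [] z"
    using acls_eq[OF z] by auto
  then show ?thesis
    unfolding bangA_def t_def[symmetric]
    using acls_eq_iff[OF wf_trunc[OF t(1)] wf_trunc[OF z]] by (simp add: to_db_trunc)
qed

lemma trunc_square_commutes:
  assumes "z \<in> Fset S ar (Suc n)"
  shows "trunc n z \<in> Fset S ar n \<and> acls S ar (Suc n) z \<in> Faset S ar (Suc n) \<and>
    acls S ar n (trunc n z) = bangA S ar n (acls S ar (Suc n) z)"
proof -
  have z: "wf S ar (Suc n) z" using assms by (simp add: Fset_def)
  then show ?thesis using wf_trunc[OF z] bangA_acls[OF z] by (auto simp: Fset_def Faset_def)
qed

section \<open>Supports of raw terms and of their classes\<close>

fun rnames :: "'o rtm \<Rightarrow> nat set" where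
  "rnames Star = {}"
| "rnames (Var x) = {x}"
| "rnames (Op s as) = (\<Union>p\<in>set as. set (fst p) \<union> rnames (snd p))"

fun rbinders :: "'o rtm \<Rightarrow> nat list" where
  "rbinders (Op s as) = concat (map (\<lambda>p. fst p @ rbinders (snd p)) as)"
| "rbinders _ = []"

lemma rnames_finite [simp]: "finite (rnames t)"
  by (induction t rule: rnames.induct) auto

lemma rnames_rperm: "rnames (rperm f t) = f ` rnames t"
  by (induction t rule: rnames.induct) (auto simp: image_Un)

lemma rperm_id: "\<forall>x\<in>rnames t. f x = x \<Longrightarrow> rperm f t = t"
proof (induction t rule: rnames.induct)
  case (3 s as)
  have "map_prod (map f) (rperm f) p = p" if "p \<in> set as" for p
    using 3 that by (cases p) (auto intro: map_idI)
  then show ?case by (simp add: map_idI)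
qed auto

lemma rsupp_eq_rnames: "rsupp t = rnames t"
  unfolding rsupp_def gsupp_def
  by (rule nsupp_eq_names) (auto simp: rnames_rperm intro: rperm_id)

lemma rperm_swp_swp [simp]: "rperm (swp a b) (rperm (swp a b) t) = t"
proof -
  have "rperm f (rperm g t) = rperm (f \<circ> g) t" for f g
    by (induction t rule: rnames.induct) auto
  then show ?thesis by (simp add: rperm_id)
qed

lemma dperm_swp_swp [simp]: "dperm (swp a b) (dperm (swp a b) d) = d"
proof -
  have "dperm f (dperm g d) = dperm (f \<circ> g) d" for f g
    by (induction g d rule: dperm.induct) auto
  then show ?thesis by (simp add: dperm_id)
qed

lemma rperm_acls:
  assumes "wf S ar n t"
  shows "rperm (swp a b) ` acls S ar n t = acls S ar n (rperm (swp a b) t)"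
proof (intro set_eqI iffI)
  fix u assume "u \<in> acls S ar n (rperm (swp a b) t)"
  then have "rperm (swp a b) u \<in> acls S ar n t"
    using assms by (simp add: acls_eq to_db_swp)
  then show "u \<in> rperm (swp a b) ` acls S ar n t"
    by (metis rperm_swp_swp image_eqI)
qed (use assms in \<open>auto simp: acls_eq to_db_swp\<close>)

lemma csupp_acls: "wf S ar n t \<Longrightarrow> csupp (acls S ar n t) = dfrees (to_db [] t)"
  unfolding csupp_def gsupp_def
  by (subst nsupp_cong[where perm' = dperm and y = "to_db [] t"])
    (simp_all add: rperm_acls acls_eq_iff to_db_swp nsupp_dperm)

lemma rnames_subset: "rnames t \<subseteq> dfrees (to_db env t) \<union> set env \<union> set (rbinders t)"
proof (induction env t rule: to_db.induct)
  case (2 env x)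
  then show ?case by (auto simp: env_index_None dest: env_index_SomeD split: option.splits)
next
  case (3 env s as)
  show ?case
  proof
    fix x assume "x \<in> rnames (Op s as)"
    then obtain p where p: "p \<in> set as" "x \<in> set (fst p) \<union> rnames (snd p)" by auto
    with "3.IH"[OF p(1)] show "x \<in> dfrees (to_db env (Op s as)) \<union> set env \<union> set (rbinders (Op s as))"
      by force
  qed
qed auto

lemma dfrees_to_db_subset: "dfrees (to_db env t) \<subseteq> rnames t"
  by (induction env t rule: to_db.induct) (auto split: option.splits)

lemma rbinders_subset: "set (rbinders t) \<subseteq> rnames t"
  by (induction t rule: rbinders.induct) auto

lemma length_rbinders: "length (rbinders t) = nbinders (to_db env t)"
proof (induction env t rule: to_db.induct)
  case (3 env s as)
  then show ?case by (simp add: length_concat comp_def) (metis (no_types, lifting) map_eq_conv)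
qed (auto split: option.splits)

lemma rnames_eq: "rnames t = dfrees (to_db [] t) \<union> set (rbinders t)"
  using rnames_subset[of t "[]"] dfrees_to_db_subset[of "[]" t] rbinders_subset[of t] by auto

section \<open>The Barendregt convention and safety\<close>

definition barendregt :: "'o rtm \<Rightarrow> bool" where
  "barendregt t \<longleftrightarrow> distinct (rbinders t) \<and> set (rbinders t) \<inter> dfrees (to_db [] t) = {}"

lemma card_rnames_le: "card (rnames t) \<le> card (dfrees (to_db [] t)) + nbinders (to_db [] t)"
proof -
  have "card (rnames t) \<le> card (dfrees (to_db [] t)) + card (set (rbinders t))"
    unfolding rnames_eq by (rule card_Un_le)
  also have "\<dots> \<le> card (dfrees (to_db [] t)) + nbinders (to_db [] t)"
    using card_length[of "rbinders t"] length_rbinders[of t "[]"] by simp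
  finally show ?thesis .
qed

lemma barendregt_iff_card:
  "barendregt t \<longleftrightarrow> card (rnames t) = card (dfrees (to_db [] t)) + nbinders (to_db [] t)"
proof -
  let ?F = "dfrees (to_db [] t)" and ?B = "set (rbinders t)"
  have "card (?F \<union> ?B) + card (?F \<inter> ?B) = card ?F + card ?B"
    using card_Un_Int[of ?F ?B] by simp
  moreover have "card ?B \<le> length (rbinders t)"
    by (rule card_length)
  moreover have "card ?B = length (rbinders t) \<longleftrightarrow> distinct (rbinders t)"
    using card_distinct distinct_card by blast
  ultimately show ?thesis
    unfolding barendregt_def rnames_eq length_rbinders[of t "[]", symmetric]
    by (auto simp: Int_commute)
qed

section \<open>Named representatives and grafting\<close>

text \<open>\<open>named c env d\<close> names the binders of \<open>d\<close> by \<open>c, c + 1, \<dots>\<close>, in left-to-right order.\<close>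

fun named :: "nat \<Rightarrow> nat list \<Rightarrow> 'o dbtm \<Rightarrow> 'o rtm"
and named_args :: "nat \<Rightarrow> nat list \<Rightarrow> (nat \<times> 'o dbtm) list \<Rightarrow> (nat list \<times> 'o rtm) list" where
  "named c env DStar = Star"
| "named c env (DFree x) = Var x"
| "named c env (DBound i) = Var (env ! i)"
| "named c env (DOp s ds) = Op s (named_args c env ds)"
| "named_args c env [] = []"
| "named_args c env (p # ds) =
     ([c..<c + fst p], named (c + fst p) (rev [c..<c + fst p] @ env) (snd p))
       # named_args (c + fst p + nbinders (snd p)) env ds"

text \<open>\<open>graft c env u d\<close> keeps \<open>u\<close> and replaces each of its leaves \<open>Star\<close> by the named subterm of
\<open>d\<close> in the same position, again using the fresh names \<open>c, c + 1, \<dots>\<close>.\<close>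

fun graft :: "nat \<Rightarrow> nat list \<Rightarrow> 'o rtm \<Rightarrow> 'o dbtm \<Rightarrow> 'o rtm"
and graft_args :: "nat \<Rightarrow> nat list \<Rightarrow> (nat list \<times> 'o rtm) list \<Rightarrow> (nat \<times> 'o dbtm) list
    \<Rightarrow> (nat list \<times> 'o rtm) list" where
  "graft c env Star d = named c env d"
| "graft c env (Var x) d = Var x"
| "graft c env (Op s as) (DOp s' ds) = Op s (graft_args c env as ds)"
| "graft c env (Op s as) _ = Op s as"
| "graft_args c env (p # as) (q # ds) =
     (fst p, graft c (rev (fst p) @ env) (snd p) (snd q))
       # graft_args (c + nbinders (snd q)) env as ds"
| "graft_args c env _ _ = []"

definition args_binders :: "(nat list \<times> 'o rtm) list \<Rightarrow> nat list" where
  "args_binders as = concat (map (\<lambda>p. fst p @ rbinders (snd p)) as)"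

lemma args_binders_simps [simp]:
  "args_binders [] = []"
  "args_binders (p # as) = fst p @ rbinders (snd p) @ args_binders as"
  "rbinders (Op s as) = args_binders as"
  by (auto simp: args_binders_def)

declare rbinders.simps(1) [simp del]

lemma upt_append: "i \<le> j \<Longrightarrow> j \<le> k \<Longrightarrow> [i..<j] @ [j..<k] = [i..<k]"
  by (metis le_add_diff_inverse upt_add_eq_append)

lemma rbinders_named:
  fixes d :: "'o dbtm" and ds :: "(nat \<times> 'o dbtm) list"
  shows "rbinders (named c env d) = [c..<c + nbinders d]"
    "args_binders (named_args c env ds) =
       [c..<c + sum_list (map (\<lambda>p. fst p + nbinders (snd p)) ds)]"
proof (induction c env d and c env ds rule: named_named_args.induct)
qed (auto simp: upt_append add.assoc)

lemma to_db_named: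
  fixes d :: "'o dbtm" and ds :: "(nat \<times> 'o dbtm) list"
  shows "distinct env \<Longrightarrow> dbound_below (length env) d \<Longrightarrow> \<forall>x\<in>set env. x < c \<Longrightarrow>
      \<forall>x\<in>dfrees d. x < c \<and> x \<notin> set env \<Longrightarrow> to_db env (named c env d) = d"
    "distinct env \<Longrightarrow> \<forall>p\<in>set ds. dbound_below (length env + fst p) (snd p) \<Longrightarrow> \<forall>x\<in>set env. x < c \<Longrightarrow>
      \<forall>p\<in>set ds. \<forall>x\<in>dfrees (snd p). x < c \<and> x \<notin> set env \<Longrightarrow>
      map (\<lambda>p. (length (fst p), to_db (rev (fst p) @ env) (snd p))) (named_args c env ds) = ds"
proof (induction c env d and c env ds rule: named_named_args.induct)
  case (2 c env x) then show ?case by (simp add: env_index_None[THEN iffD2])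
next
  case (3 c env i) then show ?case by (simp add: env_index_nth)
next
  case (6 c env p ds)
  have "to_db (rev [c..<c + fst p] @ env) (named (c + fst p) (rev [c..<c + fst p] @ env) (snd p))
      = snd p"
    by (rule 6(1)) (use "6.prems" in \<open>auto simp: add.commute\<close>)
  moreover have "map (\<lambda>p. (length (fst p), to_db (rev (fst p) @ env) (snd p)))
      (named_args (c + fst p + nbinders (snd p)) env ds) = ds"
    by (rule 6(2)) (use "6.prems" in \<open>auto simp: trans_less_add1\<close>)
  ultimately show ?case by simp
qed auto

lemma map_length_fst_named_args: "map (length \<circ> fst) (named_args c env ds) = map fst ds"
  by (induction ds arbitrary: c) auto

lemma wf_named:
  fixes d :: "'o dbtm" and ds :: "(nat \<times> 'o dbtm) list"
  shows "dwf S ar m d \<Longrightarrow> wf S ar m (named c env d)"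
    "\<forall>p\<in>set ds. dwf S ar m (snd p) \<Longrightarrow> \<forall>p\<in>set (named_args c env ds). wf S ar m (snd p)"
proof (induction c env d and c env ds arbitrary: m and m rule: named_named_args.induct)
  case (1 c env) then show ?case by (cases m) auto
next
  case (2 c env x) then show ?case by (cases m) auto
next
  case (3 c env i) then show ?case by (cases m) auto
next
  case (4 c env s ds)
  then show ?case by (cases m) (auto simp: map_length_fst_named_args)
qed auto

lemma exists_barendregt_rep:
  assumes u: "wf S ar n u"
  shows "\<exists>w. wf S ar n w \<and> to_db [] w = to_db [] u \<and> barendregt w"
proof -
  let ?d = "to_db [] u"
  obtain c where c: "\<forall>x\<in>dfrees ?d. x < c"
    using finite_nat_set_iff_bounded dfrees_finite by blast
  define w where "w = named c [] ?d"
  have "wf S ar n w"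
    unfolding w_def by (rule wf_named(1)[OF dwf_to_db[OF u]])
  moreover have db: "to_db [] w = ?d"
    unfolding w_def by (rule to_db_named(1)) (use c dbound_below_to_db[of "[]" u] in auto)
  moreover have "barendregt w"
    using c db by (auto simp: barendregt_def w_def rbinders_named(1))
  ultimately show ?thesis by blast
qed

lemma safe_iff_barendregt:
  "safe (Fset S ar n) rsupp (acls S ar n) u \<longleftrightarrow> wf S ar n u \<and> barendregt u"
proof
  assume s: "safe (Fset S ar n) rsupp (acls S ar n) u"
  then have u: "wf S ar n u" by (simp add: safe_def Fset_def)
  obtain w where w: "wf S ar n w" "to_db [] w = to_db [] u" "barendregt w"
    using exists_barendregt_rep[OF u] by blast
  then have "card (rnames w) \<le> card (rnames u)"
    using s acls_eq_iff[OF w(1) u] by (auto simp: safe_def Fset_def rsupp_eq_rnames)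
  then show "wf S ar n u \<and> barendregt u"
    using u w card_rnames_le[of u] by (simp add: barendregt_iff_card)
next
  assume "wf S ar n u \<and> barendregt u"
  then show "safe (Fset S ar n) rsupp (acls S ar n) u"
    using card_rnames_le acls_eq_iff
    by (fastforce simp: safe_def Fset_def rsupp_eq_rnames barendregt_iff_card)
qed

lemma bound_names_barendregt:
  "wf S ar n u \<Longrightarrow> barendregt u \<Longrightarrow> rsupp u - csupp (acls S ar n u) = set (rbinders u)"
  by (auto simp: rsupp_eq_rnames csupp_acls rnames_eq barendregt_def)

lemma trunc_graft:
  fixes u :: "'o rtm" and d :: "'o dbtm"
    and as :: "(nat list \<times> 'o rtm) list" and ds :: "(nat \<times> 'o dbtm) list"
  shows "wf S ar m u \<Longrightarrow> dtrunc m d = to_db env u \<Longrightarrow> trunc m (graft c env u d) = u"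
    "\<forall>p\<in>set as. wf S ar m (snd p) \<Longrightarrow>
      map (\<lambda>p. (length (fst p), to_db (rev (fst p) @ env) (snd p))) as =
        map (\<lambda>q. (fst q, dtrunc m (snd q))) ds \<Longrightarrow>
      map (\<lambda>p. (fst p, trunc m (snd p))) (graft_args c env as ds) = as"
proof (induction c env u d and c env as ds arbitrary: m and m rule: graft_graft_args.induct)
  case (3 c env s as s' ds)
  then obtain m' where m: "m = Suc m'" by (cases m) auto
  have "map (\<lambda>p. (fst p, trunc m' (snd p))) (graft_args c env as ds) = as"
    using 3 m by (intro 3(1)) auto
  then show ?case using m by (simp add: split_def)
next
  case (5 c env p as q ds)
  have "trunc m (graft c (rev (fst p) @ env) (snd p) (snd q)) = snd p"
    using 5 by (intro 5(1)) auto
  moreover have "map (\<lambda>p. (fst p, trunc m (snd p))) (graft_args (c + nbinders (snd q)) env as ds) = as"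
    using 5 by (intro 5(2)) auto
  ultimately show ?case by simp
next
  case (1 c env d) then show ?case by (cases m) auto
next
  case (2 c env x d) then show ?case by (cases m) auto
next
  case ("4_1" c env s as) then show ?case by (cases m) auto
next
  case ("4_2" c env s as x) then show ?case by (cases m) auto
next
  case ("4_3" c env s as x) then show ?case by (cases m) auto
qed auto

lemma wf_graft:
  fixes u :: "'o rtm" and d :: "'o dbtm"
    and as :: "(nat list \<times> 'o rtm) list" and ds :: "(nat \<times> 'o dbtm) list"
  shows "wf S ar m u \<Longrightarrow> dwf S ar (Suc m) d \<Longrightarrow> dtrunc m d = to_db env u \<Longrightarrow>
      wf S ar (Suc m) (graft c env u d)"
    "\<forall>p\<in>set as. wf S ar m (snd p) \<Longrightarrow> \<forall>q\<in>set ds. dwf S ar (Suc m) (snd q) \<Longrightarrow>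
      map (\<lambda>p. (length (fst p), to_db (rev (fst p) @ env) (snd p))) as =
        map (\<lambda>q. (fst q, dtrunc m (snd q))) ds \<Longrightarrow>
      (\<forall>p\<in>set (graft_args c env as ds). wf S ar (Suc m) (snd p)) \<and>
      map (length \<circ> fst) (graft_args c env as ds) = map (length \<circ> fst) as"
proof (induction c env u d and c env as ds arbitrary: m and m rule: graft_graft_args.induct)
  case (1 c env d)
  then have "m = 0" by (cases m) auto
  with 1 show ?case using wf_named(1)[of S ar "Suc 0" d c env] by simp
next
  case (3 c env s as s' ds)
  then obtain m' where m: "m = Suc m'" by (cases m) auto
  have "(\<forall>p\<in>set (graft_args c env as ds). wf S ar (Suc m') (snd p)) \<and>
      map (length \<circ> fst) (graft_args c env as ds) = map (length \<circ> fst) as"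
    using 3 m by (intro 3(1)) auto
  then show ?case using 3(2) m by auto
next
  case (5 c env p as q ds)
  have "wf S ar (Suc m) (graft c (rev (fst p) @ env) (snd p) (snd q))"
    using 5 by (intro 5(1)) auto
  moreover have "(\<forall>p\<in>set (graft_args (c + nbinders (snd q)) env as ds). wf S ar (Suc m) (snd p)) \<and>
      map (length \<circ> fst) (graft_args (c + nbinders (snd q)) env as ds) = map (length \<circ> fst) as"
    using 5 by (intro 5(2)) auto
  ultimately show ?case by (simp add: comp_def)
next
  case (2 c env x d) then show ?case by (cases m) auto
next
  case ("4_1" c env s as) then show ?case by (cases m) auto
next
  case ("4_2" c env s as x) then show ?case by (cases m) auto
next
  case ("4_3" c env s as x) then show ?case by (cases m) auto
qed auto

text \<open>The hypotheses ensure that no binder of \<open>u\<close> or \<open>env\<close> and no fresh binder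
\<open>\<ge> c\<close> captures a free name of \<open>d\<close>.\<close>

lemma to_db_graft:
  fixes u :: "'o rtm" and d :: "'o dbtm"
    and as :: "(nat list \<times> 'o rtm) list" and ds :: "(nat \<times> 'o dbtm) list"
  shows "wf S ar m u \<Longrightarrow> dtrunc m d = to_db env u \<Longrightarrow> distinct env \<Longrightarrow> distinct (rbinders u) \<Longrightarrow>
      set (rbinders u) \<inter> set env = {} \<Longrightarrow> dfrees d \<inter> (set env \<union> set (rbinders u)) = {} \<Longrightarrow>
      \<forall>x\<in>set env \<union> set (rbinders u) \<union> dfrees d. x < c \<Longrightarrow> dbound_below (length env) d \<Longrightarrow>
      to_db env (graft c env u d) = d"
    "\<forall>p\<in>set as. wf S ar m (snd p) \<Longrightarrow>
      map (\<lambda>p. (length (fst p), to_db (rev (fst p) @ env) (snd p))) as =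
        map (\<lambda>q. (fst q, dtrunc m (snd q))) ds \<Longrightarrow>
      distinct env \<Longrightarrow> distinct (args_binders as) \<Longrightarrow> set (args_binders as) \<inter> set env = {} \<Longrightarrow>
      (\<Union>q\<in>set ds. dfrees (snd q)) \<inter> (set env \<union> set (args_binders as)) = {} \<Longrightarrow>
      \<forall>x\<in>set env \<union> set (args_binders as) \<union> (\<Union>q\<in>set ds. dfrees (snd q)). x < c \<Longrightarrow>
      \<forall>q\<in>set ds. dbound_below (length env + fst q) (snd q) \<Longrightarrow>
      map (\<lambda>p. (length (fst p), to_db (rev (fst p) @ env) (snd p))) (graft_args c env as ds) = ds"
proof (induction c env u d and c env as ds arbitrary: m and m rule: graft_graft_args.induct)
  case (1 c env d)
  have "to_db env (named c env d) = d" by (rule to_db_named(1)) (use 1 in auto)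
  then show ?case by simp
next
  case (2 c env x d) then show ?case by (cases m; cases d) (auto split: option.splits)
next
  case (3 c env s as s' ds)
  then obtain m' where m: "m = Suc m'" by (cases m) auto
  have "map (\<lambda>p. (length (fst p), to_db (rev (fst p) @ env) (snd p))) (graft_args c env as ds) = ds"
    using 3 m by (intro 3(1)) auto
  then show ?case using 3(3) m by auto
next
  case (5 c env p as q ds)
  have q: "fst q = length (fst p)" "dtrunc m (snd q) = to_db (rev (fst p) @ env) (snd p)"
    using 5(4) by auto
  have "to_db (rev (fst p) @ env) (graft c (rev (fst p) @ env) (snd p) (snd q)) = snd q"
    by (rule 5(1)) (use "5.prems" q in \<open>auto simp: add.commute\<close>)
  moreover have "map (\<lambda>p. (length (fst p), to_db (rev (fst p) @ env) (snd p)))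
      (graft_args (c + nbinders (snd q)) env as ds) = ds"
    by (rule 5(2)) (use "5.prems" in \<open>auto intro: trans_less_add1\<close>)
  ultimately show ?case using q by (simp add: prod_eq_iff)
next
  case ("4_1" c env s as) then show ?case by (cases m) auto
next
  case ("4_2" c env s as x) then show ?case by (cases m) auto
next
  case ("4_3" c env s as x) then show ?case by (cases m) auto
qed auto

lemma distinct_append_fresh:
  fixes xs ys zs ys' zs' :: "nat list"
  assumes dist: "distinct (xs @ ys @ zs)" and lt: "\<forall>x\<in>set (xs @ ys @ zs). x < c"
    and ys': "distinct ys'" "set ys' \<subseteq> set ys \<union> {c..<c + k}"
    and zs': "distinct zs'" "set zs' \<subseteq> set zs \<union> {c + k..<c + k + m}"
  shows "distinct (xs @ ys' @ zs') \<and> set (xs @ ys' @ zs') \<subseteq> set (xs @ ys @ zs) \<union> {c..<c + (k + m)}"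
proof -
  have old_below: "set xs \<union> set ys \<union> set zs \<subseteq> {..<c}"
    using lt by auto
  have "set xs \<inter> (set ys \<union> {c..<c + k}) = {}"
    using dist old_below by auto
  moreover have "(set xs \<union> set ys \<union> {c..<c + k}) \<inter> (set zs \<union> {c + k..<c + k + m}) = {}"
    using dist old_below by auto
  ultimately have "set xs \<inter> set ys' = {}" "(set xs \<union> set ys') \<inter> set zs' = {}"
    using ys'(2) zs'(2) by blast+
  moreover have "{c..<c + k} \<union> {c + k..<c + k + m} = {c..<c + (k + m)}"
    by auto
  ultimately show ?thesis
    using dist ys' zs' by auto
qed

lemma rbinders_graft:
  fixes u :: "'o rtm" and d :: "'o dbtm"
    and as :: "(nat list \<times> 'o rtm) list" and ds :: "(nat \<times> 'o dbtm) list"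
  shows "distinct (rbinders u) \<Longrightarrow> \<forall>x\<in>set (rbinders u). x < c \<Longrightarrow>
      distinct (rbinders (graft c env u d)) \<and>
      set (rbinders (graft c env u d)) \<subseteq> set (rbinders u) \<union> {c..<c + nbinders d}"
    "distinct (args_binders as) \<Longrightarrow> \<forall>x\<in>set (args_binders as). x < c \<Longrightarrow>
      distinct (args_binders (graft_args c env as ds)) \<and>
      set (args_binders (graft_args c env as ds)) \<subseteq>
        set (args_binders as) \<union> {c..<c + sum_list (map (\<lambda>q. nbinders (snd q)) ds)}"
proof (induction c env u d and c env as ds rule: graft_graft_args.induct)
  case (1 c env d) then show ?case by (simp add: rbinders_named(1))
next
  case (3 c env s as s' ds)
  have "distinct (args_binders (graft_args c env as ds)) \<and> set (args_binders (graft_args c env as ds))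
      \<subseteq> set (args_binders as) \<union> {c..<c + sum_list (map (\<lambda>q. nbinders (snd q)) ds)}"
    using 3 by (intro 3(1)) auto
  moreover have "sum_list (map (\<lambda>q. nbinders (snd q)) ds) \<le> nbinders (DOp s' ds)"
    by (simp add: sum_list_mono)
  ultimately show ?case by auto
next
  case (5 c env p as q ds)
  have "distinct (rbinders (graft c (rev (fst p) @ env) (snd p) (snd q))) \<and>
      set (rbinders (graft c (rev (fst p) @ env) (snd p) (snd q)))
        \<subseteq> set (rbinders (snd p)) \<union> {c..<c + nbinders (snd q)}"
    using "5.prems" by (intro 5(1)) auto
  moreover have "distinct (args_binders (graft_args (c + nbinders (snd q)) env as ds)) \<and>
      set (args_binders (graft_args (c + nbinders (snd q)) env as ds)) \<subseteq> set (args_binders as) \<union>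
        {c + nbinders (snd q)..<c + nbinders (snd q) + sum_list (map (\<lambda>q. nbinders (snd q)) ds)}"
    using "5.prems" by (intro 5(2)) (auto intro: trans_less_add1)
  ultimately show ?case
    using distinct_append_fresh[of "fst p" "rbinders (snd p)" "args_binders as" c] "5.prems"
    by (simp only: graft_args.simps args_binders_simps fst_conv snd_conv list.map sum_list.Cons) blast
qed auto

lemma barendregt_lift:
  assumes u: "wf S ar n u" "barendregt u" and t: "wf S ar (Suc n) t"
    and trunc_t: "to_db [] u = dtrunc n (to_db [] t)"
    and fresh: "set (rbinders u) \<inter> dfrees (to_db [] t) = {}"
  shows "\<exists>z. wf S ar (Suc n) z \<and> barendregt z \<and> trunc n z = u \<and> to_db [] z = to_db [] t"
proof -
  let ?d = "to_db [] t"
  obtain c where c: "\<forall>x\<in>rnames u \<union> dfrees ?d. x < c"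
    using finite_nat_set_iff_bounded[of "rnames u \<union> dfrees ?d"] by auto
  then have c_binders: "\<forall>x\<in>set (rbinders u). x < c"
    using rbinders_subset by blast
  define z where "z = graft c [] u ?d"
  have "trunc n z = u"
    unfolding z_def by (rule trunc_graft(1)[OF u(1)]) (simp add: trunc_t)
  moreover have "wf S ar (Suc n) z"
    unfolding z_def by (rule wf_graft(1)[OF u(1)]) (use dwf_to_db[OF t] trunc_t in auto)
  moreover have db: "to_db [] z = ?d"
    unfolding z_def
    by (rule to_db_graft(1)[OF u(1)])
      (use u(2) trunc_t fresh c c_binders dbound_below_to_db[of "[]" t] in
        \<open>auto simp: barendregt_def\<close>)
  moreover have "barendregt z"
  proof -
    have z_binders: "distinct (rbinders z)"
      "set (rbinders z) \<subseteq> set (rbinders u) \<union> {c..<c + nbinders ?d}"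
      using rbinders_graft(1)[of u c] u(2) c_binders by (auto simp: z_def barendregt_def)
    have "set (rbinders z) \<inter> dfrees ?d = {}"
    proof (intro equals0I)
      fix x assume x: "x \<in> set (rbinders z) \<inter> dfrees ?d"
      then have "x < c" using c by blast
      then have "x \<in> set (rbinders u)" using x z_binders(2) by auto
      then show False using x fresh by blast
    qed
    then show ?thesis
      using z_binders(1) db by (simp add: barendregt_def)
  qed
  ultimately show ?thesis by blast
qed

theorem proposition5p46:
  fixes Sig :: "'o set" and ar :: "'o \<Rightarrow> nat list" and n :: nat
  assumes "countable Sig"
  shows "safe_square (Fset Sig ar (Suc n)) (Fset Sig ar n) (Faset Sig ar (Suc n)) (Faset Sig ar n)
           rsupp rsupp csupp csupp
           (trunc n) (acls Sig ar n) (acls Sig ar (Suc n)) (bangA Sig ar n)"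
  unfolding safe_square_def
proof (intro conjI[OF ballI] ballI impI)
  fix z assume "z \<in> Fset Sig ar (Suc n)"
  then show "trunc n z \<in> Fset Sig ar n \<and> acls Sig ar (Suc n) z \<in> Faset Sig ar (Suc n) \<and>
      acls Sig ar n (trunc n z) = bangA Sig ar n (acls Sig ar (Suc n) z)"
    by (rule trunc_square_commutes)
next
  fix u v
  assume "u \<in> Fset Sig ar n" "v \<in> Faset Sig ar (Suc n)"
    and h: "safe (Fset Sig ar n) rsupp (acls Sig ar n) u \<and> acls Sig ar n u = bangA Sig ar n v \<and>
      (rsupp u - csupp (acls Sig ar n u)) \<inter> csupp v = {}"
  then obtain t where t: "wf Sig ar (Suc n) t" and v: "v = acls Sig ar (Suc n) t"
    by (auto simp: Faset_def Fset_def)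
  have u: "wf Sig ar n u" "barendregt u"
    using h safe_iff_barendregt by blast+
  have "to_db [] u = dtrunc n (to_db [] t)"
    using h acls_eq_iff[OF u(1) wf_trunc[OF t]] by (simp add: v bangA_acls[OF t] to_db_trunc)
  moreover have "set (rbinders u) \<inter> dfrees (to_db [] t) = {}"
    using h by (simp add: v bound_names_barendregt[OF u] csupp_acls[OF t])
  ultimately obtain z
    where z: "wf Sig ar (Suc n) z" "barendregt z" "trunc n z = u" "to_db [] z = to_db [] t"
    using barendregt_lift[OF u t] by blast
  have "z \<in> Fset Sig ar (Suc n)"
    using z(1) unfolding Fset_def by blast
  moreover have "safe (Fset Sig ar (Suc n)) rsupp (acls Sig ar (Suc n)) z"
    using z(1,2) safe_iff_barendregt by blast
  moreover have "acls Sig ar (Suc n) z = v"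
    using acls_eq_iff[OF z(1) t] z(4) v by blast
  ultimately show "\<exists>z\<in>Fset Sig ar (Suc n). safe (Fset Sig ar (Suc n)) rsupp (acls Sig ar (Suc n)) z \<and>
      trunc n z = u \<and> acls Sig ar (Suc n) z = v"
    using z(3) by blast
qed

end
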